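(* Let $R$ be a Bézout domain and let $A,B,C\in R^{n\times n}$ satisfy $ABA=ACA$. If $AB$ and $CA$ are group invertible, then $(AB)(AB)^{\#}$ is similar to $(CA)(CA)^{\#}$.
   Context: A Bézout domain is an integral domain in which every finitely generated ideal is principal. A matrix $M\in R^{n\times n}$ is group invertible if there exists $X\in R^{n\times n}$ with $MX=XM$, $XMX=X$, $MXM=M$; such $X$ is unique and denoted $M^{\#}$. Two matrices $M,N\in R^{n\times n}$ are similar if $M=S^{-1}NS$ for some invertible $S\in R^{n\times n}$. *)

theory Defs
  imports "Jordan_Normal_Form.Matrix"
begin

text \<open>Bezout domain: an integral domain (type class idom) in which every finitely
  generated ideal is principal.\<close>
definition bezout_domain :: "'a::idom itself \<Rightarrow> bool" where
  "bezout_domain _ \<longleftrightarrow>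
     (\<forall>S :: 'a set. finite S \<longrightarrow>
        (\<exists>d. {x. \<exists>c. x = (\<Sum>s\<in>S. c s * s)} = {x. \<exists>r. x = r * d}))"

definition is_group_inverse :: "'a::comm_ring_1 mat \<Rightarrow> 'a mat \<Rightarrow> bool" where
  "is_group_inverse M X \<longleftrightarrow>
     (let n = dim_row M in M \<in> carrier_mat n n \<and> X \<in> carrier_mat n n \<and>
        M * X = X * M \<and> X * M * X = X \<and> M * X * M = M)"

definition group_invertible :: "'a::comm_ring_1 mat \<Rightarrow> bool" where
  "group_invertible M \<longleftrightarrow> (\<exists>X. is_group_inverse M X)"

definition group_inv :: "'a::comm_ring_1 mat \<Rightarrow> 'a mat" where
  "group_inv M = (THE X. is_group_inverse M X)"

end

theory Submission
  imports Defs "Jordan_Normal_Form.Determinant"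
begin

(* Put M = AB and N = CA. The identity ABA = ACA gives MA = AN, and from it W = N^# B satisfies
   A W = M M^# and W A = N N^#, so the idempotents M M^# and N N^# are algebraically equivalent
   (of the form XY and YX). Over a Bezout domain every idempotent matrix is similar to diag(I_r, 0):
   a nonzero fixed vector is moved to a multiple of e_0 by unimodular 2x2 operations, after which
   the idempotent is block upper triangular with an idempotent corner, and one inducts on the size.
   Finally, algebraically equivalent diag(I_r, 0) and diag(I_s, 0) have r = s, since otherwise I_s
   would factor through fewer than s coordinates, which the determinant rules out. *)

lemma is_group_inverseD:
  assumes "is_group_inverse M X" and "M \<in> carrier_mat n n"
  shows "X \<in> carrier_mat n n" "M * X = X * M" "X * M * X = X" "M * X * M = M"
  using assms unfolding is_group_inverse_def Let_def by auto

lemma group_inverse_unique: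
  fixes M :: "'a::comm_ring_1 mat"
  assumes X: "is_group_inverse M X" and Y: "is_group_inverse M Y"
  shows "X = Y"
proof -
  define n where "n = dim_row M"
  have M: "M \<in> carrier_mat n n" using X unfolding is_group_inverse_def Let_def n_def by auto
  note X' = is_group_inverseD[OF X M] and Y' = is_group_inverseD[OF Y M]
  note assoc = assoc_mult_mat[of _ n n _ n _ n]
  have "X * M = X * (M * Y * M)" using Y'(4) by simp
  also have "\<dots> = (X * M) * (Y * M)" using M X'(1) Y'(1) by (simp add: assoc)
  also have "\<dots> = (M * X) * (M * Y)" by (simp only: X'(2) Y'(2))
  also have "\<dots> = (M * X * M) * Y" using M X'(1) Y'(1) by (simp add: assoc)
  finally have XM: "X * M = M * Y" using X'(4) by simp
  have "X = X * M * X" using X'(3) by simp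
  also have "\<dots> = Y * (M * X)" using M X'(1) Y'(1) by (simp add: XM Y'(2) assoc)
  also have "\<dots> = Y * M * Y" using M X'(1) Y'(1) by (simp add: X'(2) XM assoc)
  finally show ?thesis using Y'(3) by simp
qed

lemma group_inv_is_group_inverse:
  assumes "group_invertible M"
  shows "is_group_inverse M (group_inv M)"
  using assms group_inverse_unique unfolding group_invertible_def group_inv_def
  by (metis theI)

lemma group_inverse_idempotent:
  assumes "is_group_inverse M X" and "M \<in> carrier_mat n n"
  shows "M * X * (M * X) = M * X"
proof -
  note X = is_group_inverseD[OF assms]
  have "M * X * (M * X) = M * X * M * X" using assms(2) X(1) by (simp add: assoc_mult_mat[of _ n n _ n _ n])
  thus ?thesis using X(4) by simp
qed

lemma group_projection_right:
  fixes A B C :: "'a::comm_ring_1 mat"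
  assumes A: "A \<in> carrier_mat n n" and B: "B \<in> carrier_mat n n" and C: "C \<in> carrier_mat n n"
    and ABA: "A * B * A = A * C * A" and Y: "is_group_inverse (C * A) Y"
  shows "Y * B * A = C * A * Y"
proof -
  define N where "N = C * A"
  have N: "N \<in> carrier_mat n n" using A C by (simp add: N_def)
  note Y' = is_group_inverseD[OF Y[folded N_def] N]
  note assoc = assoc_mult_mat[of _ n n _ n _ n]
  have YYN: "Y * Y * N = Y"
    using N Y'(1) Y'(3) by (simp add: Y'(2) assoc)
  have "Y * B * A = Y * Y * (C * (A * B * A))"
    using A B C Y'(1) by (subst YYN[symmetric]) (simp add: N_def assoc)
  also have "\<dots> = Y * Y * N * N"
    using A C Y'(1) by (simp add: ABA N_def assoc)
  also have "\<dots> = N * Y"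
    by (simp only: YYN Y'(2))
  finally show ?thesis by (simp add: N_def)
qed

lemma group_inverse_range_eq:
  assumes X: "is_group_inverse M X" and M: "M \<in> carrier_mat n n"
    and W: "W = M * Z" and Z: "Z \<in> carrier_mat n n" and MMW: "M * M * W = M * M"
  shows "W = M * X"
proof -
  note X' = is_group_inverseD[OF X M]
  note assoc = assoc_mult_mat[of _ n n _ n _ n]
  have "M * X * W = (M * X * M) * Z"
    using M X'(1) Z by (simp add: W assoc)
  hence fixes_W: "M * X * W = W"
    using X'(4) W by simp
  have MX: "M * X = X * X * M * M"
    using M X'(1,3) by (simp add: X'(2) assoc)
  have "M * X * W = X * X * (M * M * W)"
    using M X'(1) Z by (simp add: W MX assoc)
  also have "\<dots> = M * X"
    using M X'(1) by (simp add: MMW MX assoc)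
  finally show ?thesis
    using fixes_W by simp
qed

lemma group_projection_left:
  fixes A B C :: "'a::comm_ring_1 mat"
  assumes A: "A \<in> carrier_mat n n" and B: "B \<in> carrier_mat n n" and C: "C \<in> carrier_mat n n"
    and ABA: "A * B * A = A * C * A"
    and X: "is_group_inverse (A * B) X" and Y: "is_group_inverse (C * A) Y"
  shows "A * (Y * B) = A * B * X"
proof -
  define M where "M = A * B"
  define N where "N = C * A"
  have M: "M \<in> carrier_mat n n" and N: "N \<in> carrier_mat n n"
    using A B C by (simp_all add: M_def N_def)
  note Y' = is_group_inverseD[OF Y[folded N_def] N]
  note assoc = assoc_mult_mat[of _ n n _ n _ n]
  have "A * N = M * A"
    using A B C ABA by (simp add: M_def N_def assoc)
  hence AN: "A * (N * Z) = M * (A * Z)" if "Z \<in> carrier_mat n n" for Z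
    using A M N that by (metis assoc)
  have NYY: "N * Y * Y = Y"
    using Y'(3) by (simp only: Y'(2))
  have "N * N * Y = N * (Y * N)"
    using N Y'(1) by (simp add: Y'(2) assoc)
  hence NNY: "N * N * Y = N"
    using N Y'(1,4) by (simp add: assoc)
  have "A * (Y * B) = A * (N * Y * Y) * B"
    using A B Y'(1) by (simp add: NYY assoc)
  also have "\<dots> = M * (A * Y * Y * B)"
    using A B M N Y'(1) by (simp add: AN assoc)
  finally have range: "A * (Y * B) = M * (A * Y * Y * B)" .
  have "M * M * (A * (Y * B)) = A * (N * N * Y) * B"
    using A B M N Y'(1) by (simp add: AN assoc)
  also have "\<dots> = A * C * A * B"
    unfolding NNY using A B C by (simp add: N_def assoc)
  also have "\<dots> = M * M"
    using A B C by (simp add: ABA[symmetric] M_def assoc)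
  finally have "M * M * (A * (Y * B)) = M * M" .
  moreover have "A * Y * Y * B \<in> carrier_mat n n"
    using A B Y'(1) by (auto intro!: mult_carrier_mat[of _ n n])
  ultimately have "A * (Y * B) = M * X"
    using group_inverse_range_eq[OF X[folded M_def] M range] by blast
  thus ?thesis
    by (simp add: M_def)
qed

definition algebraically_equivalent :: "nat \<Rightarrow> 'a::semiring_1 mat \<Rightarrow> 'a mat \<Rightarrow> bool" where
  "algebraically_equivalent n E F \<longleftrightarrow>
     (\<exists>X Y. X \<in> carrier_mat n n \<and> Y \<in> carrier_mat n n \<and> X * Y = E \<and> Y * X = F)"

lemma algebraically_equivalent_sym:
  "algebraically_equivalent n E F \<Longrightarrow> algebraically_equivalent n F E"
  unfolding algebraically_equivalent_def by blast

lemma algebraically_equivalent_similar: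
  assumes "similar_mat E E'" and "algebraically_equivalent n E F"
  shows "algebraically_equivalent n E' F"
proof -
  obtain X Y where X: "X \<in> carrier_mat n n" and Y: "Y \<in> carrier_mat n n"
    and XY: "X * Y = E" and YX: "Y * X = F"
    using assms(2) unfolding algebraically_equivalent_def by blast
  obtain m P Q where PQ: "{E, E', P, Q} \<subseteq> carrier_mat m m" "P * Q = 1\<^sub>m m" "Q * P = 1\<^sub>m m"
    and E: "E = P * E' * Q"
    using similar_matD[OF assms(1)] by blast
  have "m = n" using PQ(1) XY X Y by auto
  hence P: "P \<in> carrier_mat n n" and Q: "Q \<in> carrier_mat n n" and E': "E' \<in> carrier_mat n n"
    and PQ1: "P * Q = 1\<^sub>m n" and QP1: "Q * P = 1\<^sub>m n"
    using PQ by auto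
  note assoc = assoc_mult_mat[of _ n n _ n _ n]
  have "Q * X * (Y * P) = Q * (P * E' * Q) * P"
    using X Y P Q by (simp add: assoc flip: XY E)
  also have "\<dots> = (Q * P) * E' * (Q * P)"
    using P Q E' by (simp add: assoc)
  finally have XY': "Q * X * (Y * P) = E'"
    using E' by (simp add: QP1)
  have "Y * P * (Q * X) = Y * (P * Q) * X"
    using X Y P Q by (simp add: assoc)
  hence YX': "Y * P * (Q * X) = F"
    using X Y by (simp add: PQ1 YX)
  have "Q * X \<in> carrier_mat n n" "Y * P \<in> carrier_mat n n"
    using X Y P Q by auto
  with XY' YX' show ?thesis
    unfolding algebraically_equivalent_def by blast
qed

definition std_idem :: "nat \<Rightarrow> nat \<Rightarrow> 'a::{zero,one} mat" where
  "std_idem r n = mat_diag n (\<lambda>i. if i < r then 1 else 0)"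

lemma std_idem_carrier [simp]: "std_idem r n \<in> carrier_mat n n"
  by (simp add: std_idem_def)

lemma mat_diag_zero: "mat_diag n (\<lambda>i. 0) = 0\<^sub>m n n"
  by (rule eq_matI) (auto simp: mat_diag_def)

lemma std_idem_zero: "std_idem 0 n = 0\<^sub>m n n"
  by (simp add: std_idem_def mat_diag_zero)

lemma four_block_mat_std_idem:
  "four_block_mat (1\<^sub>m 1) (0\<^sub>m 1 m) (0\<^sub>m m 1) (std_idem r m) = std_idem (Suc r) (Suc m)"
  by (rule eq_matI) (auto simp: std_idem_def mat_diag_def)

lemma det_zero_if_zero_col:
  fixes M :: "'a::idom mat"
  assumes M: "M \<in> carrier_mat n n" and j: "j < n" and zero: "\<And>i. i < n \<Longrightarrow> M $$ (i, j) = 0"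
  shows "det M = 0"
proof -
  have "M *\<^sub>v unit_vec n j = 0\<^sub>v n"
    using M j zero by (intro eq_vecI) auto
  thus ?thesis
    unfolding det_0_iff_vec_prod_zero[OF M] using j by (intro exI[of _ "unit_vec n j"]) auto
qed

lemma std_idem_equivalent_invertible_zero_col:
  fixes X Y :: "'a::comm_ring_1 mat"
  assumes X: "X \<in> carrier_mat n n" and Y: "Y \<in> carrier_mat n n"
    and XY: "X * Y = std_idem r n" and YX: "Y * X = std_idem s n" and "r < s" "s \<le> n"
  obtains M N :: "'a mat" where "M \<in> carrier_mat n n" "N \<in> carrier_mat n n" "M * N = 1\<^sub>m n"
    "\<And>i. i < n \<Longrightarrow> M $$ (i, r) = 0"
proof -
  define Dr Ds K :: "'a mat"
    where "Dr = std_idem r n" and "Ds = std_idem s n" and "K = mat_diag n (\<lambda>i. if i < s then 0 else 1)"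
  have D: "Dr \<in> carrier_mat n n" "Ds \<in> carrier_mat n n" "K \<in> carrier_mat n n"
    by (simp_all add: Dr_def Ds_def K_def)
  have DrDr: "Dr * Dr = Dr" and DsDs: "Ds * Ds = Ds" and KK: "K * K = K"
    and DrK: "Dr * K = 0\<^sub>m n n" and KDr: "K * Dr = 0\<^sub>m n n"
    unfolding Dr_def Ds_def K_def std_idem_def mat_diag_diag mat_diag_zero[symmetric]
    using \<open>r < s\<close> by (auto intro!: arg_cong[where f = "mat_diag n"])
  have DsK: "Ds + K = 1\<^sub>m n"
    by (rule eq_matI) (auto simp: Ds_def K_def std_idem_def mat_diag_def)
  note assoc = assoc_mult_mat[of _ n n _ n _ n]
  (* P Q = Ds although P kills the r-th unit vector; adding K = 1 - Ds turns this into an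
     invertible matrix P + K with a zero column. *)
  define P Q where "P = Ds * Y * Dr" and "Q = Dr * X * Ds"
  have PQc: "P \<in> carrier_mat n n" "Q \<in> carrier_mat n n"
    using X Y D unfolding P_def Q_def by (auto intro!: mult_carrier_mat[of _ n n])
  have "P * Q = Ds * (Y * (Dr * Dr) * X) * Ds"
    using X Y D PQc by (simp add: P_def Q_def assoc)
  also have "\<dots> = Ds * (Y * X) * (Y * X) * Ds"
    unfolding DrDr using X Y D by (simp add: Dr_def assoc flip: XY)
  also have "\<dots> = Ds"
    using X Y D PQc by (simp add: YX DsDs flip: Ds_def)
  finally have PQ: "P * Q = Ds" .
  have PK: "P * K = 0\<^sub>m n n"
    using X Y D by (simp add: P_def DrK assoc)
  have "K * Q = K * Dr * X * Ds"
    using X D by (simp add: Q_def assoc)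
  hence KQ: "K * Q = 0\<^sub>m n n"
    using X D PQc by (simp add: KDr)
  have "(P + K) * (Q + K) = P * Q + K * Q + (P * K + K * K)"
    using X Y D PQc by (simp add: add_mult_distrib_mat[of _ n n] mult_add_distrib_mat[of _ n n])
  hence "(P + K) * (Q + K) = 1\<^sub>m n"
    using X Y D PQc by (simp add: PQ PK KQ KK DsK)
  moreover have "(P + K) $$ (i, r) = 0" if "i < n" for i
  proof -
    have "(Ds * Y * Dr) $$ (i, r) = 0"
      unfolding Dr_def std_idem_def using D Y that \<open>r < s\<close> \<open>s \<le> n\<close>
      by (subst mat_diag_mult_right[of "Ds * Y" n n]) auto
    thus ?thesis
      using D PQc that \<open>r < s\<close> \<open>s \<le> n\<close> by (simp add: P_def K_def mat_diag_def)
  qed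
  ultimately show ?thesis
    using D PQc that[of "P + K" "Q + K"] by simp
qed

lemma std_idem_equivalent_le:
  assumes "algebraically_equivalent n (std_idem r n :: 'a::idom mat) (std_idem s n)" and "s \<le> n"
  shows "s \<le> r"
proof (rule ccontr)
  assume "\<not> s \<le> r"
  obtain X Y :: "'a mat" where X: "X \<in> carrier_mat n n" and Y: "Y \<in> carrier_mat n n"
    and XY: "X * Y = std_idem r n" and YX: "Y * X = std_idem s n"
    using assms(1) unfolding algebraically_equivalent_def by blast
  obtain M N :: "'a mat" where M: "M \<in> carrier_mat n n" and N: "N \<in> carrier_mat n n" and MN: "M * N = 1\<^sub>m n"
    and zero_col: "\<And>i. i < n \<Longrightarrow> M $$ (i, r) = 0"
    using std_idem_equivalent_invertible_zero_col[OF X Y XY YX] \<open>\<not> s \<le> r\<close> assms(2) by (metis not_le)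
  have "det M = 0"
    using det_zero_if_zero_col[OF M _ zero_col] \<open>\<not> s \<le> r\<close> assms(2) by simp
  moreover have "det M * det N = 1"
    using det_mult[OF M N] MN by simp
  ultimately show False by simp
qed

lemma std_idem_equivalent_eq:
  assumes "algebraically_equivalent n (std_idem r n :: 'a::idom mat) (std_idem s n)" and "r \<le> n" and "s \<le> n"
  shows "r = s"
  using std_idem_equivalent_le[OF assms(1,3)] std_idem_equivalent_le[OF algebraically_equivalent_sym[OF assms(1)] assms(2)]
  by simp

definition inverse_mats :: "nat \<Rightarrow> 'a::semiring_1 mat \<Rightarrow> 'a mat \<Rightarrow> bool" where
  "inverse_mats n U V \<longleftrightarrow>
     U \<in> carrier_mat n n \<and> V \<in> carrier_mat n n \<and> U * V = 1\<^sub>m n \<and> V * U = 1\<^sub>m n"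

lemma inverse_mats_one: "inverse_mats n (1\<^sub>m n) (1\<^sub>m n)"
  by (simp add: inverse_mats_def)

lemma inverse_mats_mult:
  assumes "inverse_mats n G G'" and "inverse_mats n U V"
  shows "inverse_mats n (G * U) (V * G')"
proof -
  have carrier: "G \<in> carrier_mat n n" "G' \<in> carrier_mat n n" "U \<in> carrier_mat n n" "V \<in> carrier_mat n n"
    and inv: "G * G' = 1\<^sub>m n" "G' * G = 1\<^sub>m n" "U * V = 1\<^sub>m n" "V * U = 1\<^sub>m n"
    using assms unfolding inverse_mats_def by auto
  note assoc = assoc_mult_mat[of _ n n _ n _ n]
  have "G * U * (V * G') = G * (U * V) * G'"
    using carrier by (simp add: assoc)
  also have "\<dots> = 1\<^sub>m n"
    using carrier by (simp add: inv)
  finally have "G * U * (V * G') = 1\<^sub>m n" .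
  have "V * G' * (G * U) = V * (G' * G) * U"
    using carrier by (simp add: assoc)
  also have "\<dots> = 1\<^sub>m n"
    using carrier by (simp add: inv)
  finally have "V * G' * (G * U) = 1\<^sub>m n" .
  with \<open>G * U * (V * G') = 1\<^sub>m n\<close> show ?thesis
    using carrier unfolding inverse_mats_def by simp
qed

lemma similar_mat_conjugate:
  assumes E: "E \<in> carrier_mat n n" and UV: "inverse_mats n U V"
  shows "similar_mat E (U * E * V)"
proof -
  have carrier: "U \<in> carrier_mat n n" "V \<in> carrier_mat n n" and inv: "U * V = 1\<^sub>m n" "V * U = 1\<^sub>m n"
    using UV unfolding inverse_mats_def by auto
  have "V * (U * E * V) * U = (V * U) * E * (V * U)"
    using E carrier by (simp add: assoc_mult_mat[of _ n n _ n _ n])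
  also have "\<dots> = E"
    using E by (simp add: inv)
  finally have "E = V * (U * E * V) * U" ..
  thus ?thesis
    using E carrier inv by (intro similar_matI[of _ _ V U n]) auto
qed

lemma bezout_domain_gcd_comb:
  fixes a b :: "'a::idom"
  assumes "bezout_domain TYPE('a)"
  obtains d x y where "d dvd a" "d dvd b" "d = x * a + y * b"
proof -
  let ?I = "{z. \<exists>c. z = (\<Sum>s\<in>{a, b}. c s * s)}"
  obtain d where I: "?I = {z. \<exists>r. z = r * d}"
    using assms[unfolded bezout_domain_def, rule_format, of "{a, b}"] by auto
  have "t \<in> ?I" if "t \<in> {a, b}" for t
  proof -
    have "(\<Sum>s\<in>{a, b}. (if s = t then 1 else 0) * s) = (\<Sum>s\<in>{a, b}. if s = t then s else 0)"
      by (rule sum.cong) auto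
    also have "\<dots> = t"
      using that by (simp add: sum.delta)
    finally have "(\<Sum>s\<in>{a, b}. (if s = t then 1 else 0) * s) = t" .
    thus ?thesis
      by (intro CollectI exI[of _ "\<lambda>s. if s = t then 1 else 0"]) simp
  qed
  hence dvd: "d dvd a" "d dvd b"
    unfolding I by (auto simp: dvd_def mult.commute)
  have "d \<in> ?I"
    unfolding I by (auto intro: exI[of _ 1])
  then obtain c where "d = (\<Sum>s\<in>{a, b}. c s * s)" by blast
  hence "d = c a * a + (if a = b then 0 else c b) * b"
    by (cases "a = b") simp_all
  with dvd show ?thesis using that by blast
qed

definition plane_mat :: "nat \<Rightarrow> nat \<Rightarrow> 'a \<Rightarrow> 'a \<Rightarrow> 'a \<Rightarrow> 'a \<Rightarrow> 'a::comm_ring_1 mat" where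
  "plane_mat n k a b c d = mat n n (\<lambda>(i, j).
     if i = 0 then (if j = 0 then a else if j = k then b else 0)
     else if i = k then (if j = 0 then c else if j = k then d else 0)
     else if i = j then 1 else 0)"

lemma plane_mat_carrier [simp]: "plane_mat n k a b c d \<in> carrier_mat n n"
  by (simp add: plane_mat_def)

lemma plane_mat_dims [simp]: "dim_row (plane_mat n k a b c d) = n" "dim_col (plane_mat n k a b c d) = n"
  by (simp_all add: plane_mat_def)

lemma plane_mat_index [simp]:
  "i < n \<Longrightarrow> j < n \<Longrightarrow> plane_mat n k a b c d $$ (i, j) =
    (if i = 0 then (if j = 0 then a else if j = k then b else 0)
     else if i = k then (if j = 0 then c else if j = k then d else 0)
     else if i = j then 1 else 0)"
  by (simp add: plane_mat_def)

lemma plane_mat_row_sum: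
  fixes f :: "nat \<Rightarrow> 'a::comm_ring_1"
  assumes k: "0 < k" "k < n" and i: "i < n"
  shows "(\<Sum>l\<in>{0..<n}. plane_mat n k a b c d $$ (i, l) * f l) =
    (if i = 0 then a * f 0 + b * f k else if i = k then c * f 0 + d * f k else f i)"
proof -
  let ?P = "plane_mat n k a b c d"
  have "(\<Sum>l\<in>{0..<n}. ?P $$ (i, l) * f l) =
    (\<Sum>l\<in>{0..<n}. (if l = 0 then ?P $$ (i, 0) * f 0 else 0) + (if l = k then ?P $$ (i, k) * f k else 0) +
                   (if l = i \<and> i \<noteq> 0 \<and> i \<noteq> k then f i else 0))"
    by (rule sum.cong) (use k i in auto)
  also have "\<dots> = ?P $$ (i, 0) * f 0 + ?P $$ (i, k) * f k + (if i \<noteq> 0 \<and> i \<noteq> k then f i else 0)"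
    using k i by (simp add: sum.distrib)
  finally show ?thesis
    using k i by auto
qed

lemma plane_mat_mult_index:
  assumes k: "0 < k" "k < n" and Z: "Z \<in> carrier_mat n m" and i: "i < n" and j: "j < m"
  shows "(plane_mat n k a b c d * Z) $$ (i, j) =
    (if i = 0 then a * Z $$ (0, j) + b * Z $$ (k, j)
     else if i = k then c * Z $$ (0, j) + d * Z $$ (k, j) else Z $$ (i, j))"
proof -
  have "(plane_mat n k a b c d * Z) $$ (i, j) = (\<Sum>l\<in>{0..<n}. plane_mat n k a b c d $$ (i, l) * Z $$ (l, j))"
    using Z i j by (auto simp: scalar_prod_def intro!: sum.cong)
  also have "\<dots> = (if i = 0 then a * Z $$ (0, j) + b * Z $$ (k, j)
     else if i = k then c * Z $$ (0, j) + d * Z $$ (k, j) else Z $$ (i, j))"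
    by (rule plane_mat_row_sum[OF k i])
  finally show ?thesis .
qed

lemma plane_mat_mult_vec_index:
  assumes k: "0 < k" "k < n" and v: "v \<in> carrier_vec n" and i: "i < n"
  shows "(plane_mat n k a b c d *\<^sub>v v) $ i =
    (if i = 0 then a * v $ 0 + b * v $ k else if i = k then c * v $ 0 + d * v $ k else v $ i)"
proof -
  have "(plane_mat n k a b c d *\<^sub>v v) $ i = (\<Sum>l\<in>{0..<n}. plane_mat n k a b c d $$ (i, l) * v $ l)"
    using v i by (auto simp: scalar_prod_def intro!: sum.cong)
  also have "\<dots> = (if i = 0 then a * v $ 0 + b * v $ k else if i = k then c * v $ 0 + d * v $ k else v $ i)"
    by (rule plane_mat_row_sum[OF k i])
  finally show ?thesis .
qed

lemma plane_mat_mult: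
  assumes k: "0 < k" "k < n"
  shows "plane_mat n k a b c d * plane_mat n k a' b' c' d' =
    plane_mat n k (a * a' + b * c') (a * b' + b * d') (c * a' + d * c') (c * b' + d * d')"
  by (rule eq_matI)
    (use k in \<open>auto simp del: index_mult_mat(1) simp: plane_mat_mult_index[OF k plane_mat_carrier]\<close>)

lemma plane_mat_one:
  assumes "0 < k" "k < n"
  shows "plane_mat n k 1 0 0 1 = 1\<^sub>m n"
  using assms by (intro eq_matI) auto

lemma bezout_clear_entry:
  fixes w :: "'a::idom vec"
  assumes bz: "bezout_domain TYPE('a)" and w: "w \<in> carrier_vec n" and k: "0 < k" "k < n"
  obtains G G' where "inverse_mats n G G'"
    "(G *\<^sub>v w) $ k = 0" "\<And>i. i < n \<Longrightarrow> i \<noteq> 0 \<Longrightarrow> i \<noteq> k \<Longrightarrow> (G *\<^sub>v w) $ i = w $ i"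
proof -
  obtain d x y where "d dvd w $ 0" "d dvd w $ k" and d: "d = x * w $ 0 + y * w $ k"
    using bezout_domain_gcd_comb[OF bz] by metis
  then obtain a' b' where a': "w $ 0 = d * a'" and b': "w $ k = d * b'"
    by (elim dvdE)
  show ?thesis
  proof (cases "d = 0")
    case True
    thus ?thesis
      using that[OF inverse_mats_one] w b' by simp
  next
    case False
    have "d * (x * a' + y * b') = d * 1"
      using d a' b' by (simp add: algebra_simps)
    hence unimod: "x * a' + y * b' = 1"
      using False by simp
    (* The block [[x, y], [-b', a']] is unimodular and maps (w_0, w_k) = d (a', b') to (d, 0). *)
    let ?G = "plane_mat n k x y (- b') a'" and ?G' = "plane_mat n k a' (- y) b' x"
    have "inverse_mats n ?G ?G'"
      unfolding inverse_mats_def plane_mat_mult[OF k] using unimod plane_mat_one[OF k]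
      by (simp add: algebra_simps)
    moreover have "(?G *\<^sub>v w) $ k = 0"
      using k w a' b' by (simp add: plane_mat_mult_vec_index algebra_simps del: index_mult_mat_vec)
    moreover have "(?G *\<^sub>v w) $ i = w $ i" if "i < n" "i \<noteq> 0" "i \<noteq> k" for i
      using k w that by (simp add: plane_mat_mult_vec_index del: index_mult_mat_vec)
    ultimately show ?thesis
      using that[of ?G ?G'] by simp
  qed
qed

lemma bezout_reduce_vec:
  fixes v :: "'a::idom vec"
  assumes bz: "bezout_domain TYPE('a)" and v: "v \<in> carrier_vec n"
  obtains U V where "inverse_mats n U V" "\<And>i. 0 < i \<Longrightarrow> i < n \<Longrightarrow> (U *\<^sub>v v) $ i = 0"
proof -
  have "\<exists>U V. inverse_mats n U V \<and> (\<forall>i. 0 < i \<and> i < k \<longrightarrow> (U *\<^sub>v v) $ i = 0)" if "k \<le> n" for k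
    using that
  proof (induction k)
    case 0
    show ?case using inverse_mats_one by blast
  next
    case (Suc k)
    then obtain U V where UV: "inverse_mats n U V" and zero: "\<forall>i. 0 < i \<and> i < k \<longrightarrow> (U *\<^sub>v v) $ i = 0"
      by auto
    show ?case
    proof (cases "k = 0")
      case True
      thus ?thesis using UV zero by auto
    next
      case False
      hence k: "0 < k" "k < n" using Suc.prems by auto
      have U: "U \<in> carrier_mat n n" using UV by (simp add: inverse_mats_def)
      hence w: "U *\<^sub>v v \<in> carrier_vec n" using v by simp
      obtain G G' where GG': "inverse_mats n G G'"
        and Gk: "(G *\<^sub>v (U *\<^sub>v v)) $ k = 0"
        and Gi: "\<And>i. i < n \<Longrightarrow> i \<noteq> 0 \<Longrightarrow> i \<noteq> k \<Longrightarrow> (G *\<^sub>v (U *\<^sub>v v)) $ i = (U *\<^sub>v v) $ i"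
        using bezout_clear_entry[OF bz w k] by blast
      have "G \<in> carrier_mat n n"
        using GG' by (simp add: inverse_mats_def)
      hence "(G * U) *\<^sub>v v = G *\<^sub>v (U *\<^sub>v v)"
        using U v by simp
      hence "((G * U) *\<^sub>v v) $ i = 0" if "0 < i" "i < Suc k" for i
        using that zero Gk Gi[of i] k by (cases "i = k") auto
      thus ?thesis
        using inverse_mats_mult[OF GG' UV] by blast
    qed
  qed
  thus ?thesis
    using that by blast
qed

lemma split_block_four_block_mat:
  assumes "A \<in> carrier_mat nr1 nc1" "B \<in> carrier_mat nr1 nc2"
    "C \<in> carrier_mat nr2 nc1" "D \<in> carrier_mat nr2 nc2"
  shows "split_block (four_block_mat A B C D) nr1 nc1 = (A, B, C, D)"
  using assms unfolding split_block_def Let_def by (auto intro!: eq_matI)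

lemma similar_mat_four_block_upper:
  fixes X D :: "'a::comm_ring_1 mat"
  assumes X: "X \<in> carrier_mat k m" and D: "D \<in> carrier_mat m m" and XD: "X * D = 0\<^sub>m k m"
  shows "similar_mat (four_block_mat (1\<^sub>m k) X (0\<^sub>m m k) D) (four_block_mat (1\<^sub>m k) (0\<^sub>m k m) (0\<^sub>m m k) D)"
proof -
  define T T' Blk where "T = four_block_mat (1\<^sub>m k) (- X) (0\<^sub>m m k) (1\<^sub>m m)"
    and "T' = four_block_mat (1\<^sub>m k) X (0\<^sub>m m k) (1\<^sub>m m)"
    and "Blk = four_block_mat (1\<^sub>m k) (0\<^sub>m k m) (0\<^sub>m m k) D"
  have X_neg: "X + - X = 0\<^sub>m k m" and neg_zero: "- 0\<^sub>m m m = (0\<^sub>m m m :: 'a mat)"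
    using X by (auto intro!: eq_matI)
  have "T * T' = four_block_mat (1\<^sub>m k) (X + - X) (0\<^sub>m m k) (1\<^sub>m m)"
    unfolding T_def T'_def using X by (subst mult_four_block_mat[of _ k k _ m _ m _ _ k _ m]) auto
  also have "\<dots> = 1\<^sub>m (k + m)"
    using X by (simp add: X_neg)
  finally have TT': "T * T' = 1\<^sub>m (k + m)" .
  have "T' * T = four_block_mat (1\<^sub>m k) (- X + X) (0\<^sub>m m k) (1\<^sub>m m)"
    unfolding T_def T'_def using X by (subst mult_four_block_mat[of _ k k _ m _ m _ _ k _ m]) (auto simp: neg_zero)
  also have "\<dots> = 1\<^sub>m (k + m)"
    using X by simp
  finally have T'T: "T' * T = 1\<^sub>m (k + m)" .
  have "T * Blk * T' = four_block_mat (1\<^sub>m k) (- (X * D)) (0\<^sub>m m k) D * T'"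
    unfolding T_def Blk_def using X D by (subst mult_four_block_mat[of _ k k _ m _ m _ _ k _ m]) auto
  also have "\<dots> = four_block_mat (1\<^sub>m k) X (0\<^sub>m m k) D"
    unfolding T'_def XD using X D by (subst mult_four_block_mat[of _ k k _ m _ m _ _ k _ m]) auto
  finally have "four_block_mat (1\<^sub>m k) X (0\<^sub>m m k) D = T * Blk * T'" ..
  moreover have "T \<in> carrier_mat (k + m) (k + m)" "T' \<in> carrier_mat (k + m) (k + m)"
    "Blk \<in> carrier_mat (k + m) (k + m)"
    using X D by (simp_all add: T_def T'_def Blk_def)
  ultimately have "similar_mat (four_block_mat (1\<^sub>m k) X (0\<^sub>m m k) D) Blk"
    using TT' T'T X D by (intro similar_matI[of _ _ T T' "k + m"]) auto
  thus ?thesis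
    by (simp add: Blk_def)
qed

lemma idempotent_nonzero_fixed_vec:
  assumes E: "E \<in> carrier_mat n n" and EE: "E * E = E" and nonzero: "E \<noteq> 0\<^sub>m n n"
  obtains v where "v \<in> carrier_vec n" "v \<noteq> 0\<^sub>v n" "E *\<^sub>v v = v"
proof -
  have "\<exists>j < n. col E j \<noteq> 0\<^sub>v n"
  proof (rule ccontr)
    assume "\<not> (\<exists>j < n. col E j \<noteq> 0\<^sub>v n)"
    hence "E = 0\<^sub>m n n"
      using E by (intro mat_col_eqI) auto
    with nonzero show False ..
  qed
  then obtain j where j: "j < n" and "col E j \<noteq> 0\<^sub>v n"
    by blast
  moreover have "E *\<^sub>v col E j = col E j"
    using col_mult2[OF E E j, symmetric] EE by simp
  ultimately show ?thesis
    using E by (intro that[of "col E j"]) simp_all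
qed

lemma fixed_vec_conj_unit_first_col:
  fixes E :: "'a::idom mat"
  assumes bz: "bezout_domain TYPE('a)" and E: "E \<in> carrier_mat n n"
    and v: "v \<in> carrier_vec n" "v \<noteq> 0\<^sub>v n" and Ev: "E *\<^sub>v v = v"
  obtains U V where "inverse_mats n U V" "col (U * E * V) 0 = unit_vec n 0"
proof -
  obtain U V where UV: "inverse_mats n U V" and zero: "\<And>i. 0 < i \<Longrightarrow> i < n \<Longrightarrow> (U *\<^sub>v v) $ i = 0"
    using bezout_reduce_vec[OF bz v(1)] by blast
  have U: "U \<in> carrier_mat n n" "V \<in> carrier_mat n n" and VU: "V * U = 1\<^sub>m n"
    using UV unfolding inverse_mats_def by auto
  define g where "g = (U *\<^sub>v v) $ 0"
  have Uv: "U *\<^sub>v v = g \<cdot>\<^sub>v unit_vec n 0"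
    using U zero by (intro eq_vecI) (auto simp: g_def)
  have VUv: "V *\<^sub>v (U *\<^sub>v v) = v"
    using U v by (simp add: VU flip: assoc_mult_mat_vec)
  have "g \<noteq> 0"
  proof
    assume "g = 0"
    hence "U *\<^sub>v v = 0\<^sub>v n"
      by (intro eq_vecI) (simp_all add: Uv)
    hence "v = V *\<^sub>v 0\<^sub>v n"
      using VUv by simp
    also have "\<dots> = 0\<^sub>v n"
      using U by (intro eq_vecI) auto
    finally show False
      using v(2) by simp
  qed
  have "(U * E * V) *\<^sub>v (U *\<^sub>v v) = U *\<^sub>v (E *\<^sub>v ((V * U) *\<^sub>v v))"
    using U E v by (simp add: assoc_mult_mat[of _ n n _ n _ n] assoc_mult_mat_vec[of _ n n _ n])
  hence fix_Uv: "(U * E * V) *\<^sub>v (g \<cdot>\<^sub>v unit_vec n 0) = g \<cdot>\<^sub>v unit_vec n 0"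
    using U v by (simp add: VU Ev flip: Uv)
  have "col (U * E * V) 0 = unit_vec n 0"
  proof (rule eq_vecI)
    fix i assume i: "i < dim_vec (unit_vec n 0 :: 'a vec)"
    have "g * (U * E * V) $$ (i, 0) = g * unit_vec n 0 $ i"
      using arg_cong[OF fix_Uv, of "\<lambda>w. w $ i"] i U E by simp
    thus "col (U * E * V) 0 $ i = unit_vec n 0 $ i"
      using \<open>g \<noteq> 0\<close> i U E by simp
  qed (use U E in simp)
  thus ?thesis
    using that UV by blast
qed

lemma idempotent_similar_unit_first_col:
  fixes E :: "'a::idom mat"
  assumes bz: "bezout_domain TYPE('a)" and E: "E \<in> carrier_mat n n" and EE: "E * E = E"
    and nonzero: "E \<noteq> 0\<^sub>m n n"
  obtains E' where "similar_mat E E'" "E' \<in> carrier_mat n n" "E' * E' = E'" "col E' 0 = unit_vec n 0"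
proof -
  obtain v where v: "v \<in> carrier_vec n" "v \<noteq> 0\<^sub>v n" "E *\<^sub>v v = v"
    using idempotent_nonzero_fixed_vec[OF E EE nonzero] by blast
  obtain U V where UV: "inverse_mats n U V" and col0: "col (U * E * V) 0 = unit_vec n 0"
    using fixed_vec_conj_unit_first_col[OF bz E v] by blast
  have U: "U \<in> carrier_mat n n" "V \<in> carrier_mat n n" and VU: "V * U = 1\<^sub>m n"
    using UV unfolding inverse_mats_def by auto
  have "U * E * V * (U * E * V) = U * E * (V * U) * E * V"
    using U E by (simp add: assoc_mult_mat[of _ n n _ n _ n])
  also have "\<dots> = U * (E * E) * V"
    using U E by (simp add: VU assoc_mult_mat[of _ n n _ n _ n])
  finally have "U * E * V * (U * E * V) = U * E * V"
    by (simp only: EE)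
  moreover have "U * E * V \<in> carrier_mat n n"
    using U E by simp
  ultimately show ?thesis
    using that[OF similar_mat_conjugate[OF E UV]] col0 by blast
qed

lemma idempotent_unit_first_col_blocks:
  fixes E :: "'a::comm_ring_1 mat"
  assumes E: "E \<in> carrier_mat (Suc m) (Suc m)" and EE: "E * E = E"
    and col0: "col E 0 = unit_vec (Suc m) 0"
  obtains X D where "X \<in> carrier_mat 1 m" "D \<in> carrier_mat m m"
    "E = four_block_mat (1\<^sub>m 1) X (0\<^sub>m m 1) D" "D * D = D" "X * D = 0\<^sub>m 1 m"
proof -
  obtain A1 X A3 D where split: "split_block E 1 1 = (A1, X, A3, D)"
    by (cases "split_block E 1 1") auto
  have dims: "dim_row E = 1 + m" "dim_col E = 1 + m"
    using E by auto
  note blocks = split_block[OF split dims]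
  have E_col0: "E $$ (i, 0) = (if i = 0 then 1 else 0)" if "i < Suc m" for i
    using arg_cong[OF col0, of "\<lambda>v. v $ i"] that E by simp
  have "A1 = mat 1 1 (\<lambda>ij. E $$ ij)" "A3 = mat m 1 (\<lambda>(i, j). E $$ (i + 1, j))"
    using split dims unfolding split_block_def Let_def by auto
  hence A1: "A1 = 1\<^sub>m 1" and A3: "A3 = 0\<^sub>m m 1"
    using E_col0 by (auto intro!: eq_matI)
  hence E_blocks: "E = four_block_mat (1\<^sub>m 1) X (0\<^sub>m m 1) D"
    using blocks by simp
  have EE_blocks: "E * E = four_block_mat (1\<^sub>m 1) (X + X * D) (0\<^sub>m m 1) (D * D)"
    unfolding E_blocks using blocks(2,4) by (subst mult_four_block_mat[of _ 1 1 _ m _ m _ _ 1 _ m]) auto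
  have "split_block (E * E) 1 1 = (1\<^sub>m 1, X + X * D, 0\<^sub>m m 1, D * D)"
    unfolding EE_blocks by (rule split_block_four_block_mat) (use blocks(2,4) in auto)
  hence XD: "X + X * D = X" and DD: "D * D = D"
    using split EE A1 A3 by simp_all
  have "X * D = 0\<^sub>m 1 m"
  proof (rule eq_matI)
    fix i j assume ij: "i < dim_row (0\<^sub>m 1 m :: 'a mat)" "j < dim_col (0\<^sub>m 1 m :: 'a mat)"
    have "X $$ (i, j) + (X * D) $$ (i, j) = X $$ (i, j)"
      using arg_cong[OF XD, of "\<lambda>M. M $$ (i, j)"] ij blocks(2,4) by (simp del: index_mult_mat(1))
    thus "(X * D) $$ (i, j) = 0\<^sub>m 1 m $$ (i, j)"
      using ij by simp
  qed (use blocks(2,4) in auto)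
  with blocks(2,4) E_blocks DD show ?thesis
    using that by blast
qed

lemma idempotent_similar_std_idem:
  fixes E :: "'a::idom mat"
  assumes bz: "bezout_domain TYPE('a)"
  shows "E \<in> carrier_mat n n \<Longrightarrow> E * E = E \<Longrightarrow> \<exists>r \<le> n. similar_mat E (std_idem r n)"
proof (induction n arbitrary: E)
  case 0
  hence "E = std_idem 0 0"
    by (intro eq_matI) (auto simp: std_idem_def mat_diag_def)
  thus ?case
    using similar_mat_refl[OF "0.prems"(1)] by auto
next
  case (Suc m)
  note E = Suc.prems(1) and EE = Suc.prems(2)
  show ?case
  proof (cases "E = 0\<^sub>m (Suc m) (Suc m)")
    case True
    thus ?thesis
      using similar_mat_refl[OF E] by (auto simp: std_idem_zero)
  next
    case False
    then obtain E' where E_similar: "similar_mat E E'" and E': "E' \<in> carrier_mat (Suc m) (Suc m)"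
      and E'E': "E' * E' = E'" and col0: "col E' 0 = unit_vec (Suc m) 0"
      using idempotent_similar_unit_first_col[OF bz E EE] by blast
    obtain X D where X: "X \<in> carrier_mat 1 m" and D: "D \<in> carrier_mat m m"
      and E'_blocks: "E' = four_block_mat (1\<^sub>m 1) X (0\<^sub>m m 1) D" and DD: "D * D = D"
      and XD: "X * D = 0\<^sub>m 1 m"
      using idempotent_unit_first_col_blocks[OF E' E'E' col0] by blast
    obtain r where r: "r \<le> m" and D_similar: "similar_mat D (std_idem r m)"
      using Suc.IH[OF D DD] by blast
    have "similar_mat (four_block_mat (1\<^sub>m 1) (0\<^sub>m 1 m) (0\<^sub>m m 1) D) (std_idem (Suc r) (Suc m))"
      unfolding four_block_mat_std_idem[symmetric]
      by (rule similar_mat_four_block_0_0[OF similar_mat_refl D_similar one_carrier_mat D]) (rule one_carrier_mat)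
    hence "similar_mat E (std_idem (Suc r) (Suc m))"
      using E_similar similar_mat_four_block_upper[OF X D XD] E'_blocks by (metis similar_mat_trans)
    thus ?thesis
      using r by auto
  qed
qed

lemma algebraically_equivalent_idempotents_similar:
  fixes E F :: "'a::idom mat"
  assumes bz: "bezout_domain TYPE('a)"
    and E: "E \<in> carrier_mat n n" "E * E = E" and F: "F \<in> carrier_mat n n" "F * F = F"
    and EF: "algebraically_equivalent n E F"
  shows "similar_mat E F"
proof -
  obtain r where r: "r \<le> n" and E_similar: "similar_mat E (std_idem r n)"
    using idempotent_similar_std_idem[OF bz E] by blast
  obtain s where s: "s \<le> n" and F_similar: "similar_mat F (std_idem s n)"
    using idempotent_similar_std_idem[OF bz F] by blast
  have "algebraically_equivalent n F (std_idem r n)"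
    using algebraically_equivalent_similar[OF E_similar EF] by (rule algebraically_equivalent_sym)
  with F_similar have "algebraically_equivalent n (std_idem s n :: 'a mat) (std_idem r n)"
    by (rule algebraically_equivalent_similar)
  hence "s = r"
    using s r by (rule std_idem_equivalent_eq)
  thus ?thesis
    using E_similar F_similar by (metis similar_mat_sym similar_mat_trans)
qed

theorem corollary3p3:
  fixes A B C :: "'a::idom mat" and n :: nat
  assumes "bezout_domain TYPE('a)"
    and "A \<in> carrier_mat n n" "B \<in> carrier_mat n n" "C \<in> carrier_mat n n"
    and "A * B * A = A * C * A"
    and "group_invertible (A * B)" "group_invertible (C * A)"
  shows "similar_mat (A * B * group_inv (A * B)) (C * A * group_inv (C * A))"
proof -
  define X Y where "X = group_inv (A * B)" and "Y = group_inv (C * A)"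
  have AB: "A * B \<in> carrier_mat n n" and CA: "C * A \<in> carrier_mat n n"
    using assms(2-4) by auto
  have X: "is_group_inverse (A * B) X" and Y: "is_group_inverse (C * A) Y"
    using assms(6,7) by (simp_all add: X_def Y_def group_inv_is_group_inverse)
  have "A * (Y * B) = A * B * X" "Y * B * A = C * A * Y"
    using group_projection_left[OF assms(2-5) X Y] group_projection_right[OF assms(2-5) Y] .
  moreover have "Y * B \<in> carrier_mat n n"
    using is_group_inverseD(1)[OF Y CA] assms(3) by simp
  ultimately have "algebraically_equivalent n (A * B * X) (C * A * Y)"
    unfolding algebraically_equivalent_def using assms(2) by blast
  moreover have "A * B * X \<in> carrier_mat n n" "C * A * Y \<in> carrier_mat n n"
    using AB CA is_group_inverseD(1)[OF X AB] is_group_inverseD(1)[OF Y CA] by auto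
  ultimately show ?thesis
    unfolding X_def[symmetric] Y_def[symmetric]
    by (intro algebraically_equivalent_idempotents_similar[OF assms(1)]
        group_inverse_idempotent[OF X AB] group_inverse_idempotent[OF Y CA])
qed

end
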